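(* Let $n\ge1$, $m,m'\ge0$. The power symmetric polynomials $p_\pi$, where $\pi$ runs over all super multiset partitions over $[m]\cup[\overline{m'}]$ with at most $n$ parts, span the subring of $S_n$-invariants of $\mathbb{C}[X_{n\times m};\Theta_{n\times m'}]$.
   Context: $\mathbb{C}[X_{n\times m};\Theta_{n\times m'}]$ is the associative $\mathbb{C}$-algebra generated by $x_{rk}$ ($1\le r\le n$, $1\le k\le m$) and $\theta_{ri}$ ($1\le r\le n$, $1\le i\le m'$) with: the $x_{rk}$ commute with each other and with all $\theta_{si}$; $\theta_{ri}\theta_{sj}=-\theta_{sj}\theta_{ri}$ for $(r,i)\ne(s,j)$; $\theta_{ri}^2=0$. $S_n$ acts by algebra automorphisms via $\sigma(x_{rk})=x_{\sigma(r)k}$, $\sigma(\theta_{ri})=\theta_{\sigma(r)i}$. Multisets are over $\{1,\dots,m\}\cup\{\bar1,\dots,\overline{m'}\}$; entries $\bar j$ are barred. A super multiset partition is a multiset $\pi=\{\!\{S_1,\dots,S_\ell\}\!\}$ of non-empty multisets (parts) such that no barred entry occurs more than once in any part and every part containing an odd number of barred entries occurs at most once in $\pi$. For a multiset $S=\{\!\{1^{a_1},\dots,m^{a_m},\bar s_1,\dots,\bar s_k\}\!\}$ with $s_1<\dots<s_k$ distinct, the power sum generator is $p_S=\sum_{r=1}^n x_{r1}^{a_1}\cdots x_{rm}^{a_m}\theta_{rs_1}\cdots\theta_{rs_k}$, and $p_\pi=p_{S_1}p_{S_2}\cdots p_{S_\ell}$ (for some fixed ordering of the parts). *)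

theory Defs
  imports Complex_Main "HOL-Library.Multiset" "HOL-Combinatorics.Permutations"
begin

(* Entries of super multisets: Ub k is the unbarred entry k (1 <= k <= m),
   Bar j is the barred entry \bar j (1 <= j <= m'). *)
datatype entry = Ub nat | Bar nat

(* ---- The algebra C[X_{n x m}; Theta_{n x m'}] ----
   A basis monomial is a pair (a, A): a (r,k) is the exponent of x_{rk},
   A is the set of indices (r,i) of the theta's that occur, the theta's being
   multiplied in increasing lexicographic order of (r,i). *)
type_synonym mono = "((nat \<times> nat) \<Rightarrow> nat) \<times> (nat \<times> nat) set"
type_synonym elt = "mono \<Rightarrow> complex"

definition plt :: "nat \<times> nat \<Rightarrow> nat \<times> nat \<Rightarrow> bool" where
  "plt u v \<longleftrightarrow> fst u < fst v \<or> (fst u = fst v \<and> snd u < snd v)"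

definition valid_mono :: "nat \<Rightarrow> nat \<Rightarrow> nat \<Rightarrow> mono \<Rightarrow> bool" where
  "valid_mono n m m' \<mu> \<longleftrightarrow>
     (\<forall>r k. fst \<mu> (r, k) \<noteq> 0 \<longrightarrow> 1 \<le> r \<and> r \<le> n \<and> 1 \<le> k \<and> k \<le> m) \<and>
     snd \<mu> \<subseteq> {1..n} \<times> {1..m'}"

definition supp :: "elt \<Rightarrow> mono set" where
  "supp f = {\<mu>. f \<mu> \<noteq> 0}"

definition in_alg :: "nat \<Rightarrow> nat \<Rightarrow> nat \<Rightarrow> elt \<Rightarrow> bool" where
  "in_alg n m m' f \<longleftrightarrow> finite (supp f) \<and> (\<forall>\<mu>\<in>supp f. valid_mono n m m' \<mu>)"

(* theta_A * theta_B = (-1)^(inv_count A B) theta_{A \<union> B} if A, B disjoint, else 0 *)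
definition inv_count :: "(nat \<times> nat) set \<Rightarrow> (nat \<times> nat) set \<Rightarrow> nat" where
  "inv_count A B = card {(u, v). u \<in> A \<and> v \<in> B \<and> plt v u}"

definition mono_mult :: "mono \<Rightarrow> mono \<Rightarrow> mono" where
  "mono_mult \<nu> \<rho> = ((\<lambda>p. fst \<nu> p + fst \<rho> p), snd \<nu> \<union> snd \<rho>)"

definition mono_coef :: "mono \<Rightarrow> mono \<Rightarrow> complex" where
  "mono_coef \<nu> \<rho> = (if snd \<nu> \<inter> snd \<rho> = {} then (-1) ^ inv_count (snd \<nu>) (snd \<rho>) else 0)"

definition mult :: "elt \<Rightarrow> elt \<Rightarrow> elt" where
  "mult f g = (\<lambda>\<mu>. \<Sum>(\<nu>, \<rho>) \<in> supp f \<times> supp g.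
       if mono_mult \<nu> \<rho> = \<mu> then mono_coef \<nu> \<rho> * f \<nu> * g \<rho> else 0)"

definition one_elt :: elt where
  "one_elt = (\<lambda>\<mu>. if \<mu> = ((\<lambda>_. 0), {}) then 1 else 0)"

definition mono_act :: "(nat \<Rightarrow> nat) \<Rightarrow> mono \<Rightarrow> mono" where
  "mono_act \<sigma> \<mu> = ((\<lambda>(r, k). fst \<mu> (inv \<sigma> r, k)), (\<lambda>(r, i). (\<sigma> r, i)) ` snd \<mu>)"

(* sign from reordering theta_{sigma u_1} ... theta_{sigma u_k} into increasing order *)
definition act_sign :: "(nat \<Rightarrow> nat) \<Rightarrow> (nat \<times> nat) set \<Rightarrow> complex" where
  "act_sign \<sigma> A = (-1) ^ card {(u, v). u \<in> A \<and> v \<in> A \<and> plt u v \<and>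
                        plt (\<sigma> (fst v), snd v) (\<sigma> (fst u), snd u)}"

definition act :: "(nat \<Rightarrow> nat) \<Rightarrow> elt \<Rightarrow> elt" where
  "act \<sigma> f = (\<lambda>\<mu>'. \<Sum>\<mu> \<in> supp f. if mono_act \<sigma> \<mu> = \<mu>' then act_sign \<sigma> (snd \<mu>) * f \<mu> else 0)"

definition invariants :: "nat \<Rightarrow> nat \<Rightarrow> nat \<Rightarrow> elt set" where
  "invariants n m m' = {f. in_alg n m m' f \<and> (\<forall>\<sigma>. \<sigma> permutes {1..n} \<longrightarrow> act \<sigma> f = f)}"

definition cspan :: "elt set \<Rightarrow> elt set" where
  "cspan G = {f. \<exists>F c. finite F \<and> F \<subseteq> G \<and> f = (\<lambda>\<mu>. \<Sum>g\<in>F. c g * g \<mu>)}"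

definition allowed_entry :: "nat \<Rightarrow> nat \<Rightarrow> entry \<Rightarrow> bool" where
  "allowed_entry m m' e \<longleftrightarrow> (case e of Ub k \<Rightarrow> 1 \<le> k \<and> k \<le> m | Bar j \<Rightarrow> 1 \<le> j \<and> j \<le> m')"

definition nbar :: "entry multiset \<Rightarrow> nat" where
  "nbar S = size (filter_mset (\<lambda>e. \<exists>j. e = Bar j) S)"

definition super_mset_partition :: "nat \<Rightarrow> nat \<Rightarrow> entry multiset multiset \<Rightarrow> bool" where
  "super_mset_partition m m' \<pi> \<longleftrightarrow>
     (\<forall>S\<in>#\<pi>. S \<noteq> {#} \<and> (\<forall>e\<in>#S. allowed_entry m m' e)
              \<and> (\<forall>j. count S (Bar j) \<le> 1)
              \<and> (odd (nbar S) \<longrightarrow> count \<pi> S \<le> 1))"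

definition psum_mono :: "nat \<Rightarrow> entry multiset \<Rightarrow> mono" where
  "psum_mono r S = ((\<lambda>(r', k). if r' = r then count S (Ub k) else 0), {(r, j) | j. Bar j \<in># S})"

(* p_S = sum_{r=1}^n x_{r1}^{a_1} ... x_{rm}^{a_m} theta_{r s_1} ... theta_{r s_k}, s_1 < ... < s_k *)
definition psum :: "nat \<Rightarrow> entry multiset \<Rightarrow> elt" where
  "psum n S = (\<lambda>\<mu>. \<Sum>r\<in>{1..n}. if \<mu> = psum_mono r S then 1 else 0)"

fun psum_list :: "nat \<Rightarrow> entry multiset list \<Rightarrow> elt" where
  "psum_list n [] = one_elt"
| "psum_list n (S # L) = mult (psum n S) (psum_list n L)"

end

theory Submission
  imports Defs
begin

text \<open>Expanding a product of power sums over all ways of assigning its factors to rows writes it as a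
  signed sum of monomials. A row permutation \<open>\<sigma>\<close> permutes the assignments, and the sign with
  which \<open>\<sigma>\<close> reorders the \<open>\<theta>\<close>'s is compatible with the signs of the multiplication, so products of
  power sums are invariant.

  Conversely, let \<open>f\<close> be invariant and \<open>\<mu>\<close> a monomial of \<open>f\<close> with the largest number \<open>K\<close> of
  nonzero rows. The contents of these rows form a multiset partition \<open>\<pi>\<close> with \<open>K \<le> n\<close> parts. It
  is super: if two equal rows carried an odd number of \<open>\<theta>\<close>'s, their transposition would fix \<open>\<mu>\<close> and
  act on it by \<open>-1\<close>, forcing \<open>f(\<mu>) = 0\<close>. The monomials of \<open>p\<^sub>\<pi>\<close> with \<open>K\<close> rows are exactly
  the row permutations of \<open>\<mu>\<close>, and \<open>\<mu>\<close> itself occurs with nonzero coefficient, because the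
  permutations fixing \<open>\<mu>\<close> act on it with sign \<open>1\<close>. Subtracting a multiple of \<open>p\<^sub>\<pi>\<close> removes the
  orbit of \<open>\<mu>\<close> from \<open>f\<close> without creating other monomials with \<open>K\<close> rows; induction on \<open>K\<close> and on
  the number of such monomials finishes the proof.\<close>

lemma card_neq_parity:
  assumes "finite X"
  shows "card {x \<in> X. P x \<noteq> Q x} + 2 * card {x \<in> X. P x \<and> Q x}
       = card {x \<in> X. P x} + card {x \<in> X. Q x}"
proof -
  have split: "card {x \<in> X. R x} = card {x \<in> X. S x} + card {x \<in> X. T x}"
    if "\<And>x. R x \<longleftrightarrow> S x \<or> T x" "\<And>x. \<not> (S x \<and> T x)" for R S T
  proof -
    have "{x \<in> X. R x} = {x \<in> X. S x} \<union> {x \<in> X. T x}" using that(1) by auto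
    then show ?thesis using assms that(2) by (simp add: card_Un_disjoint disjoint_iff)
  qed
  have "card {x \<in> X. P x \<noteq> Q x} = card {x \<in> X. P x \<and> \<not> Q x} + card {x \<in> X. Q x \<and> \<not> P x}"
    "card {x \<in> X. P x} = card {x \<in> X. P x \<and> Q x} + card {x \<in> X. P x \<and> \<not> Q x}"
    "card {x \<in> X. Q x} = card {x \<in> X. P x \<and> Q x} + card {x \<in> X. Q x \<and> \<not> P x}"
    by (rule split; blast)+
  then show ?thesis by linarith
qed

lemma map_permutes_lists_length:
  assumes "\<sigma> permutes X"
  shows "map \<sigma> ` {rs. set rs \<subseteq> X \<and> length rs = l} = {rs. set rs \<subseteq> X \<and> length rs = l}"
proof
  show "map \<sigma> ` {rs. set rs \<subseteq> X \<and> length rs = l} \<subseteq> {rs. set rs \<subseteq> X \<and> length rs = l}"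
    using permutes_in_image[OF assms] by (auto simp: subset_iff)
  show "{rs. set rs \<subseteq> X \<and> length rs = l} \<subseteq> map \<sigma> ` {rs. set rs \<subseteq> X \<and> length rs = l}"
  proof
    fix rs assume rs: "rs \<in> {rs. set rs \<subseteq> X \<and> length rs = l}"
    have "rs = map \<sigma> (map (inv \<sigma>) rs)"
      using permutes_inverses(1)[OF assms] by (simp add: map_idI)
    moreover have "map (inv \<sigma>) rs \<in> {rs. set rs \<subseteq> X \<and> length rs = l}"
      using rs permutes_in_image[OF permutes_inv[OF assms]] by auto
    ultimately show "rs \<in> map \<sigma> ` {rs. set rs \<subseteq> X \<and> length rs = l}" by blast
  qed
qed

lemma exists_distinct_list_image_mset:
  "finite R \<Longrightarrow> mset L = image_mset g (mset_set R) \<Longrightarrow> \<exists>rs. distinct rs \<and> set rs = R \<and> map g rs = L"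
proof (induction L arbitrary: R)
  case Nil
  then show ?case by (auto simp: mset_set_empty_iff)
next
  case (Cons S L)
  obtain r where r: "r \<in> R" "g r = S"
    using Cons(2,3) by (metis image_iff finite_set_mset_mset_set list.set_intros(1) set_image_mset set_mset_mset)
  have "mset L = image_mset g (mset_set (R - {r}))"
    using Cons(3) r mset_set.remove[OF Cons(2) r(1)] by simp
  then obtain rs where "distinct rs" "set rs = R - {r}" "map g rs = L"
    using Cons(1)[of "R - {r}"] Cons(2) by auto
  then show ?case using r by (intro exI[of _ "r # rs"]) auto
qed

lemma exists_permutes_map:
  "length xs = length ys \<Longrightarrow> distinct xs \<Longrightarrow> distinct ys \<Longrightarrow> set xs \<subseteq> S \<Longrightarrow> set ys \<subseteq> S \<Longrightarrow>
   \<exists>\<sigma>. \<sigma> permutes S \<and> map \<sigma> xs = ys"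
proof (induction xs ys rule: list_induct2)
  case Nil
  then show ?case using permutes_id by fastforce
next
  case (Cons x xs y ys)
  then obtain \<sigma>' where \<sigma>': "\<sigma>' permutes S" "map \<sigma>' xs = ys" by auto
  define \<sigma> where "\<sigma> = Transposition.transpose y (\<sigma>' x) \<circ> \<sigma>'"
  have "\<sigma> permutes S"
    unfolding \<sigma>_def using Cons(5,6) permutes_in_image[OF \<sigma>'(1)]
    by (intro permutes_compose[OF \<sigma>'(1)] permutes_swap_id) auto
  moreover have "\<sigma> z = \<sigma>' z" if "z \<in> set xs" for z
  proof -
    have "\<sigma>' z \<noteq> y" using that \<sigma>'(2) Cons(4) by auto
    moreover have "\<sigma>' z \<noteq> \<sigma>' x" using that Cons(3) permutes_inj[OF \<sigma>'(1)] by (auto dest: injD)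
    ultimately show ?thesis by (simp add: \<sigma>_def transpose_apply_other)
  qed
  then have "map \<sigma> xs = ys" using \<sigma>'(2) by (metis map_eq_conv)
  ultimately show ?case by (auto simp: \<sigma>_def)
qed

lemma transpose_inversion_iff:
  fixes r1 r2 r t :: nat
  assumes "r1 < r2" "r < t"
  shows "Transposition.transpose r1 r2 t < Transposition.transpose r1 r2 r \<longleftrightarrow>
    (r = r1 \<and> t = r2) \<or> (r = r1 \<and> r1 < t \<and> t < r2) \<or> (t = r2 \<and> r1 < r \<and> r < r2)"
  using assms by (auto simp: transpose_def)

definition mono_comb :: "'a set \<Rightarrow> ('a \<Rightarrow> mono) \<Rightarrow> ('a \<Rightarrow> complex) \<Rightarrow> elt" where
  "mono_comb I \<alpha> x = (\<lambda>\<mu>. \<Sum>a\<in>I. if \<alpha> a = \<mu> then x a else 0)"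

lemma supp_mono_comb: "supp (mono_comb I \<alpha> x) \<subseteq> \<alpha> ` I"
proof
  fix \<mu> assume "\<mu> \<in> supp (mono_comb I \<alpha> x)"
  then have "(\<Sum>a\<in>I. if \<alpha> a = \<mu> then x a else 0) \<noteq> 0"
    by (simp add: supp_def mono_comb_def)
  then obtain a where "a \<in> I" "(if \<alpha> a = \<mu> then x a else 0) \<noteq> 0"
    by (rule sum.not_neutral_contains_not_neutral)
  then show "\<mu> \<in> \<alpha> ` I" by (auto split: if_splits)
qed

lemma finite_supp_mono_comb: "finite I \<Longrightarrow> finite (supp (mono_comb I \<alpha> x))"
  by (meson finite_imageI finite_subset supp_mono_comb)

lemma sum_supp_extend:
  assumes "finite U" "supp f \<subseteq> U"
  shows "(\<Sum>\<mu>\<in>supp f. G \<mu> * f \<mu>) = (\<Sum>\<mu>\<in>U. G \<mu> * f \<mu>)"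
  by (rule sum.mono_neutral_left) (use assms in \<open>auto simp: supp_def\<close>)

lemma sum_supp_mono_comb:
  assumes "finite I"
  shows "(\<Sum>\<mu>\<in>supp (mono_comb I \<alpha> x). G \<mu> * mono_comb I \<alpha> x \<mu>) = (\<Sum>a\<in>I. G (\<alpha> a) * x a)"
proof -
  have "(\<Sum>\<mu>\<in>supp (mono_comb I \<alpha> x). G \<mu> * mono_comb I \<alpha> x \<mu>)
      = (\<Sum>\<mu>\<in>\<alpha> ` I. \<Sum>a\<in>I. if \<alpha> a = \<mu> then G \<mu> * x a else 0)"
    using assms unfolding sum_supp_extend[OF finite_imageI[OF assms] supp_mono_comb]
    by (simp add: mono_comb_def sum_distrib_left if_distrib cong: if_cong)
  also have "\<dots> = (\<Sum>a\<in>I. G (\<alpha> a) * x a)"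
    using assms by (subst sum.swap) (auto simp: sum.delta intro: sum.cong)
  finally show ?thesis .
qed

lemma mult_mono_comb:
  assumes "finite I" "finite J"
  shows "mult (mono_comb I \<alpha> x) (mono_comb J \<beta> y)
       = mono_comb (I \<times> J) (\<lambda>(a, b). mono_mult (\<alpha> a) (\<beta> b))
           (\<lambda>(a, b). mono_coef (\<alpha> a) (\<beta> b) * x a * y b)"
proof
  fix \<mu>
  let ?f = "mono_comb I \<alpha> x" and ?g = "mono_comb J \<beta> y"
  let ?c = "\<lambda>\<nu> \<rho>. if mono_mult \<nu> \<rho> = \<mu> then mono_coef \<nu> \<rho> else 0"
  have "mult ?f ?g \<mu> = (\<Sum>\<nu>\<in>supp ?f. (\<Sum>\<rho>\<in>supp ?g. ?c \<nu> \<rho> * ?g \<rho>) * ?f \<nu>)"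
    unfolding mult_def sum.cartesian_product[symmetric] sum_distrib_right
    by (intro sum.cong) auto
  also have "\<dots> = (\<Sum>\<nu>\<in>supp ?f. (\<Sum>b\<in>J. ?c \<nu> (\<beta> b) * y b) * ?f \<nu>)"
    using assms by (simp only: sum_supp_mono_comb)
  also have "\<dots> = (\<Sum>a\<in>I. (\<Sum>b\<in>J. ?c (\<alpha> a) (\<beta> b) * y b) * x a)"
    using assms(1) by (rule sum_supp_mono_comb)
  also have "\<dots> = mono_comb (I \<times> J) (\<lambda>(a, b). mono_mult (\<alpha> a) (\<beta> b))
           (\<lambda>(a, b). mono_coef (\<alpha> a) (\<beta> b) * x a * y b) \<mu>"
    unfolding mono_comb_def sum_distrib_right sum.cartesian_product' by (auto intro!: sum.cong)
  finally show "mult ?f ?g \<mu> = \<dots>" .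
qed

lemma act_mono_comb:
  assumes "finite I"
  shows "act \<sigma> (mono_comb I \<alpha> x)
       = mono_comb I (\<lambda>a. mono_act \<sigma> (\<alpha> a)) (\<lambda>a. act_sign \<sigma> (snd (\<alpha> a)) * x a)"
proof
  fix \<mu>'
  have "act \<sigma> (mono_comb I \<alpha> x) \<mu>' = (\<Sum>\<mu>\<in>supp (mono_comb I \<alpha> x).
         (if mono_act \<sigma> \<mu> = \<mu>' then act_sign \<sigma> (snd \<mu>) else 0) * mono_comb I \<alpha> x \<mu>)"
    unfolding act_def by (intro sum.cong) auto
  also have "\<dots> = mono_comb I (\<lambda>a. mono_act \<sigma> (\<alpha> a)) (\<lambda>a. act_sign \<sigma> (snd (\<alpha> a)) * x a) \<mu>'"
    using assms unfolding sum_supp_mono_comb[OF assms] by (auto simp: mono_comb_def intro: sum.cong)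
  finally show "act \<sigma> (mono_comb I \<alpha> x) \<mu>' = \<dots>" .
qed

lemma mono_comb_reindex:
  "inj_on h K \<Longrightarrow> mono_comb (h ` K) \<alpha> x = mono_comb K (\<lambda>k. \<alpha> (h k)) (\<lambda>k. x (h k))"
  unfolding mono_comb_def by (simp add: sum.reindex)

lemma mono_comb_cong:
  "(\<And>a. a \<in> I \<Longrightarrow> \<alpha> a = \<alpha>' a) \<Longrightarrow> (\<And>a. a \<in> I \<Longrightarrow> x a = x' a) \<Longrightarrow>
   mono_comb I \<alpha> x = mono_comb I \<alpha>' x'"
  unfolding mono_comb_def by (intro ext sum.cong) auto

section \<open>Products of power sums as sums over row assignments\<close>

definition row_assignments :: "nat \<Rightarrow> nat \<Rightarrow> nat list set" where
  "row_assignments n l = {rs. set rs \<subseteq> {1..n} \<and> length rs = l}"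

lemma finite_row_assignments: "finite (row_assignments n l)"
  unfolding row_assignments_def by (rule finite_lists_length_eq) simp

lemma row_assignments_Suc:
  "row_assignments n (Suc l) = (\<lambda>(r, rs). r # rs) ` ({1..n} \<times> row_assignments n l)"
  unfolding row_assignments_def lists_length_Suc_eq by force

text \<open>Monomial and coefficient of the term of a product of power sums that takes its
  \<open>i\<close>-th factor from row \<open>rs ! i\<close>.\<close>

fun assign_mono :: "entry multiset list \<Rightarrow> nat list \<Rightarrow> mono" where
  "assign_mono (S # L) (r # rs) = mono_mult (psum_mono r S) (assign_mono L rs)"
| "assign_mono _ _ = ((\<lambda>_. 0), {})"

fun assign_coef :: "entry multiset list \<Rightarrow> nat list \<Rightarrow> complex" where
  "assign_coef (S # L) (r # rs) = mono_coef (psum_mono r S) (assign_mono L rs) * assign_coef L rs"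
| "assign_coef _ _ = 1"

lemma psum_list_eq_mono_comb:
  "psum_list n L = mono_comb (row_assignments n (length L)) (assign_mono L) (assign_coef L)"
proof (induction L)
  case Nil
  have "row_assignments n 0 = {[]}" by (auto simp: row_assignments_def)
  then show ?case
    by (simp add: mono_comb_def one_elt_def fun_eq_iff eq_commute[of "((\<lambda>_. 0), {})"])
next
  case (Cons S L)
  have psum: "psum n S = mono_comb {1..n} (\<lambda>r. psum_mono r S) (\<lambda>_. 1)"
    unfolding psum_def mono_comb_def by (intro ext sum.cong refl) auto
  have "psum_list n (S # L) = mono_comb ({1..n} \<times> row_assignments n (length L))
      (\<lambda>(r, rs). assign_mono (S # L) (r # rs)) (\<lambda>(r, rs). assign_coef (S # L) (r # rs))"
    unfolding psum_list.simps Cons psum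
    by (subst mult_mono_comb) (auto simp: finite_row_assignments intro: mono_comb_cong)
  also have "\<dots> = mono_comb (row_assignments n (length (S # L))) (assign_mono (S # L)) (assign_coef (S # L))"
    unfolding length_Cons row_assignments_Suc
    by (subst mono_comb_reindex) (auto simp: inj_on_def intro: mono_comb_cong)
  finally show ?case .
qed

section \<open>The sign of a row permutation\<close>

lemma snd_mono_act: "snd (mono_act \<sigma> \<mu>) = map_prod \<sigma> id ` snd \<mu>"
  by (simp add: mono_act_def map_prod_def)

lemma plt_total: "u \<noteq> v \<Longrightarrow> plt u v \<longleftrightarrow> \<not> plt v u"
  by (auto simp: plt_def prod_eq_iff)

definition sign_inversions :: "(nat \<Rightarrow> nat) \<Rightarrow> (nat \<times> nat) set \<Rightarrow> ((nat \<times> nat) \<times> (nat \<times> nat)) set" where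
  "sign_inversions \<sigma> A = {(u, v). u \<in> A \<and> v \<in> A \<and> plt u v \<and> plt (map_prod \<sigma> id v) (map_prod \<sigma> id u)}"

lemma act_sign_eq: "act_sign \<sigma> A = (-1) ^ card (sign_inversions \<sigma> A)"
  by (simp add: act_sign_def sign_inversions_def map_prod_def split_def)

text \<open>A pair of \<open>\<theta>\<close>'s from different blocks is an inversion of \<open>\<sigma>\<close> exactly when its order
  before and after applying \<open>\<sigma>\<close> differ.\<close>

lemma card_sign_inversions_union:
  assumes inj: "inj \<sigma>" and fin: "finite A" "finite B" and disj: "A \<inter> B = {}"
  shows "card (sign_inversions \<sigma> (A \<union> B))
       = card (sign_inversions \<sigma> A) + card (sign_inversions \<sigma> B)
         + card {(a, b) \<in> A \<times> B. plt b a \<noteq> plt (map_prod \<sigma> id b) (map_prod \<sigma> id a)}"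
proof -
  let ?s = "map_prod \<sigma> id"
  define X1 where "X1 = {(u, v). u \<in> A \<and> v \<in> B \<and> plt u v \<and> plt (?s v) (?s u)}"
  define X2 where "X2 = {(u, v). u \<in> B \<and> v \<in> A \<and> plt u v \<and> plt (?s v) (?s u)}"
  have fin_AB: "finite (A \<times> B)" "finite (B \<times> A)" using fin by simp_all
  have fin_X: "finite X1" "finite X2"
    by (auto simp: X1_def X2_def intro: finite_subset[OF _ fin_AB(1)] finite_subset[OF _ fin_AB(2)])
  have fin_inv: "finite (sign_inversions \<sigma> C)" if "finite C" for C
    using that by (auto simp: sign_inversions_def intro: finite_subset[of _ "C \<times> C"])
  have "sign_inversions \<sigma> (A \<union> B) = sign_inversions \<sigma> A \<union> sign_inversions \<sigma> B \<union> X1 \<union> X2"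
    by (auto simp: sign_inversions_def X1_def X2_def)
  moreover have "sign_inversions \<sigma> A \<inter> sign_inversions \<sigma> B = {}"
    "(sign_inversions \<sigma> A \<union> sign_inversions \<sigma> B) \<inter> X1 = {}"
    "(sign_inversions \<sigma> A \<union> sign_inversions \<sigma> B \<union> X1) \<inter> X2 = {}"
    using disj by (auto simp: sign_inversions_def X1_def X2_def)
  ultimately have "card (sign_inversions \<sigma> (A \<union> B))
      = card (sign_inversions \<sigma> A) + card (sign_inversions \<sigma> B) + card X1 + card X2"
    using fin fin_X fin_inv by (simp add: card_Un_disjoint)
  moreover have "a \<noteq> b" "?s a \<noteq> ?s b" if "a \<in> A" "b \<in> B" for a b
    using that disj prod.inj_map[OF inj inj_on_id] by (auto dest: injD)
  then have "{(a, b) \<in> A \<times> B. plt b a \<noteq> plt (?s b) (?s a)} = X1 \<union> prod.swap ` X2"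
    by (auto simp: X1_def X2_def plt_total image_iff)
  moreover have "X1 \<inter> prod.swap ` X2 = {}"
    by (auto simp: X1_def X2_def plt_def)
  ultimately show ?thesis
    using fin_X by (simp add: card_Un_disjoint card_image)
qed

text \<open>Reordering \<open>\<theta>\<^sub>A \<theta>\<^sub>B\<close> and then permuting rows, or permuting first and then reordering
  \<open>\<theta>\<^bsub>\<sigma>A\<^esub> \<theta>\<^bsub>\<sigma>B\<^esub>\<close>, give the same sign.\<close>

lemma act_sign_union:
  assumes inj: "inj \<sigma>" and fin: "finite A" "finite B" and disj: "A \<inter> B = {}"
  shows "act_sign \<sigma> (A \<union> B) * (-1) ^ inv_count A B
       = (-1) ^ inv_count (map_prod \<sigma> id ` A) (map_prod \<sigma> id ` B) * act_sign \<sigma> A * act_sign \<sigma> B"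
proof -
  let ?s = "map_prod \<sigma> id"
  let ?P = "\<lambda>(a, b). plt b a" and ?Q = "\<lambda>(a, b). plt (?s b) (?s a)"
  have injs: "inj ?s" using inj by (simp add: prod.inj_map)
  have c_P: "inv_count A B = card {ab \<in> A \<times> B. ?P ab}"
    unfolding inv_count_def by (rule arg_cong[where f = card]) auto
  have "{(u, v). u \<in> ?s ` A \<and> v \<in> ?s ` B \<and> plt v u} = map_prod ?s ?s ` {ab \<in> A \<times> B. ?Q ab}"
    by (auto simp: image_iff) metis
  then have c_Q: "inv_count (?s ` A) (?s ` B) = card {ab \<in> A \<times> B. ?Q ab}"
    unfolding inv_count_def
    by (simp only:) (rule card_image[OF inj_on_subset[OF prod.inj_map[OF injs injs] subset_UNIV]])
  have c_union: "card (sign_inversions \<sigma> (A \<union> B))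
      = card (sign_inversions \<sigma> A) + card (sign_inversions \<sigma> B) + card {ab \<in> A \<times> B. ?P ab \<noteq> ?Q ab}"
  proof -
    have "{(a, b) \<in> A \<times> B. plt b a \<noteq> plt (?s b) (?s a)} = {ab \<in> A \<times> B. ?P ab \<noteq> ?Q ab}" by auto
    then show ?thesis using card_sign_inversions_union[OF assms] by simp
  qed
  have "even (card (sign_inversions \<sigma> (A \<union> B)) + inv_count A B
       + (inv_count (?s ` A) (?s ` B) + card (sign_inversions \<sigma> A) + card (sign_inversions \<sigma> B)))"
  proof -
    have "even (u + p + (q + a + b))" if "d + 2 * e = p + q" "u = a + b + d" for u p q a b d e :: nat
      using that by presburger
    then show ?thesis
      using card_neq_parity[of "A \<times> B" ?P ?Q] fin c_union unfolding c_P c_Q by blast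
  qed
  then show ?thesis
    unfolding act_sign_eq power_add[symmetric] mult.assoc by (simp add: minus_one_power_iff)
qed

lemma act_sign_single_row:
  assumes "\<And>u. u \<in> A \<Longrightarrow> fst u = r"
  shows "act_sign \<sigma> A = 1"
proof -
  have "sign_inversions \<sigma> A = {}"
    using assms by (auto simp: sign_inversions_def plt_def)
  then show ?thesis by (simp add: act_sign_eq)
qed

definition row_bars :: "(nat \<times> nat) set \<Rightarrow> nat \<Rightarrow> nat set" where
  "row_bars A r = {j. (r, j) \<in> A}"

lemma finite_row_bars: "finite A \<Longrightarrow> finite (row_bars A r)"
  unfolding row_bars_def using finite_vimageI[of A "Pair r"] by (simp add: vimage_def inj_def)

definition row_inversions :: "(nat \<Rightarrow> nat) \<Rightarrow> nat set \<Rightarrow> (nat \<times> nat) set" where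
  "row_inversions \<sigma> R = {(r, t). r \<in> R \<and> t \<in> R \<and> r < t \<and> \<sigma> t < \<sigma> r}"

text \<open>An injective row permutation reverses a pair of \<open>\<theta>\<close>'s exactly when it reverses their rows.\<close>

lemma card_sign_inversions:
  assumes "inj \<sigma>" "finite A"
  shows "card (sign_inversions \<sigma> A)
       = (\<Sum>p\<in>row_inversions \<sigma> (fst ` A). card (row_bars A (fst p)) * card (row_bars A (snd p)))"
proof -
  define R where "R r = {u \<in> A. fst u = r}" for r
  have "plt u v \<and> plt (map_prod \<sigma> id v) (map_prod \<sigma> id u) \<longleftrightarrow> fst u < fst v \<and> \<sigma> (fst v) < \<sigma> (fst u)"
    for u v by (auto simp: plt_def inj_eq[OF assms(1)])
  then have eq: "sign_inversions \<sigma> A = (\<Union>p\<in>row_inversions \<sigma> (fst ` A). R (fst p) \<times> R (snd p))"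
    by (auto simp: sign_inversions_def row_inversions_def R_def) force
  have fin: "finite (row_inversions \<sigma> (fst ` A))"
    using assms(2) by (auto simp: row_inversions_def intro: finite_subset[of _ "fst ` A \<times> fst ` A"])
  have card_R: "card (R r) = card (row_bars A r)" for r
  proof -
    have "R r = Pair r ` row_bars A r" by (force simp: R_def row_bars_def)
    then show ?thesis by (simp add: card_image inj_on_def)
  qed
  have "card (sign_inversions \<sigma> A) = (\<Sum>p\<in>row_inversions \<sigma> (fst ` A). card (R (fst p) \<times> R (snd p)))"
    unfolding eq using fin assms(2) by (intro card_UN_disjoint) (auto simp: R_def)
  then show ?thesis by (simp add: card_cartesian_product card_R)
qed

lemma act_sign_eq_one:
  assumes "inj \<sigma>" "finite A"
    and "\<And>p. p \<in> row_inversions \<sigma> (fst ` A) \<Longrightarrow> even (card (row_bars A (fst p)) * card (row_bars A (snd p)))"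
  shows "act_sign \<sigma> A = 1"
  using assms by (simp add: act_sign_eq card_sign_inversions dvd_sum)

lemma row_inversions_transpose:
  assumes "r1 < r2" "r1 \<in> R" "r2 \<in> R"
  shows "row_inversions (Transposition.transpose r1 r2) R
       = insert (r1, r2) (Pair r1 ` {t \<in> R. r1 < t \<and> t < r2} \<union> (\<lambda>t. (t, r2)) ` {t \<in> R. r1 < t \<and> t < r2})"
  using assms transpose_inversion_iff[OF assms(1)] by (auto simp: row_inversions_def)

lemma act_sign_transpose:
  assumes "r1 < r2" "row_bars A r1 = row_bars A r2" "odd (card (row_bars A r1))" "finite A"
  shows "act_sign (Transposition.transpose r1 r2) A = -1"
proof -
  let ?t = "Transposition.transpose r1 r2" and ?b = "\<lambda>r. card (row_bars A r)"
  define M where "M = {t \<in> fst ` A. r1 < t \<and> t < r2}"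
  obtain j where "j \<in> row_bars A r1" using assms(3) by fastforce
  then have "(r1, j) \<in> A" "(r2, j) \<in> A" using assms(2) unfolding row_bars_def by blast+
  then have rows: "r1 \<in> fst ` A" "r2 \<in> fst ` A" by force+
  have fin: "finite M" using assms(4) by (simp add: M_def)
  have "card (sign_inversions ?t A) = (\<Sum>p\<in>row_inversions ?t (fst ` A). ?b (fst p) * ?b (snd p))"
    using assms(4) by (intro card_sign_inversions) simp
  also have "\<dots> = ?b r1 * ?b r2 + (\<Sum>p\<in>Pair r1 ` M. ?b (fst p) * ?b (snd p))
      + (\<Sum>p\<in>(\<lambda>t. (t, r2)) ` M. ?b (fst p) * ?b (snd p))"
  proof -
    have "r1 \<notin> M" "r2 \<notin> M" by (simp_all add: M_def)
    then have "(r1, r2) \<notin> Pair r1 ` M \<union> (\<lambda>t. (t, r2)) ` M" "Pair r1 ` M \<inter> (\<lambda>t. (t, r2)) ` M = {}"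
      by auto
    then show ?thesis
      unfolding row_inversions_transpose[OF assms(1) rows] M_def[symmetric] using fin
      by (simp add: sum.union_disjoint)
  qed
  also have "(\<Sum>p\<in>Pair r1 ` M. ?b (fst p) * ?b (snd p)) = (\<Sum>t\<in>M. ?b r1 * ?b t)"
    by (subst sum.reindex) (auto simp: inj_on_def)
  also have "(\<Sum>p\<in>(\<lambda>t. (t, r2)) ` M. ?b (fst p) * ?b (snd p)) = (\<Sum>t\<in>M. ?b r1 * ?b t)"
    by (subst sum.reindex) (auto simp: inj_on_def assms(2) mult.commute)
  finally have "odd (card (sign_inversions ?t A))" using assms(2,3) by simp
  then show ?thesis by (simp add: act_sign_eq)
qed

section \<open>Products of power sums are invariant\<close>

lemma mono_act_mono_mult: "mono_act \<sigma> (mono_mult \<nu> \<rho>) = mono_mult (mono_act \<sigma> \<nu>) (mono_act \<sigma> \<rho>)"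
  by (auto simp: mono_act_def mono_mult_def image_Un fun_eq_iff split: prod.splits)

lemma mono_act_psum_mono:
  assumes "bij \<sigma>"
  shows "mono_act \<sigma> (psum_mono r S) = psum_mono (\<sigma> r) S"
proof -
  have "inv \<sigma> r' = r \<longleftrightarrow> r' = \<sigma> r" for r'
    using assms by (metis bij_inv_eq_iff)
  then show ?thesis
    unfolding mono_act_def psum_mono_def by (auto simp: fun_eq_iff image_iff split: prod.splits)
qed

lemma mono_act_assign_mono:
  assumes "bij \<sigma>" "length L = length rs"
  shows "mono_act \<sigma> (assign_mono L rs) = assign_mono L (map \<sigma> rs)"
  using assms(2)
proof (induction L rs rule: list_induct2)
  case Nil
  then show ?case by (auto simp: mono_act_def fun_eq_iff split: prod.splits)
next
  case (Cons S L r rs)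
  then show ?case by (simp add: mono_act_mono_mult mono_act_psum_mono assms(1))
qed

lemma snd_psum_mono: "snd (psum_mono r S) = Pair r ` {j. Bar j \<in># S}"
  by (auto simp: psum_mono_def)

lemma finite_snd_assign_mono: "finite (snd (assign_mono L rs))"
proof -
  have "finite {j. Bar j \<in># S}" for S
    using finite_vimageI[of "set_mset S" Bar] by (simp add: vimage_def inj_def)
  then show ?thesis
    by (induction L rs rule: assign_mono.induct) (auto simp: mono_mult_def snd_psum_mono)
qed

lemma act_sign_assign_coef:
  assumes "bij \<sigma>" "length L = length rs"
  shows "act_sign \<sigma> (snd (assign_mono L rs)) * assign_coef L rs = assign_coef L (map \<sigma> rs)"
  using assms(2)
proof (induction L rs rule: list_induct2)
  case Nil
  show ?case by (simp add: act_sign_def)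
next
  case (Cons S L r rs)
  let ?A = "snd (psum_mono r S)" and ?B = "snd (assign_mono L rs)" and ?s = "map_prod \<sigma> id"
  have inj: "inj \<sigma>" using assms(1) bij_is_inj by blast
  have images: "snd (psum_mono (\<sigma> r) S) = ?s ` ?A" "snd (assign_mono L (map \<sigma> rs)) = ?s ` ?B"
    by (simp_all flip: snd_mono_act add: mono_act_psum_mono mono_act_assign_mono assms(1) Cons(1))
  have row: "act_sign \<sigma> ?A = 1"
    by (rule act_sign_single_row[of _ r]) (auto simp: psum_mono_def)
  have disj_iff: "?s ` ?A \<inter> ?s ` ?B = {} \<longleftrightarrow> ?A \<inter> ?B = {}"
    using inj by (simp add: image_Int[symmetric] prod.inj_map)
  show ?case
  proof (cases "?A \<inter> ?B = {}")
    case True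
    have fin: "finite ?A" "finite ?B"
      using finite_snd_assign_mono[of "[S]" "[r]"] finite_snd_assign_mono[of L rs]
      by (simp_all add: mono_mult_def)
    show ?thesis
      using True disj_iff act_sign_union[OF inj fin True] Cons(2)
      by (simp add: mono_coef_def images mono_mult_def row mult_ac)
  next
    case False
    then show ?thesis by (simp add: mono_coef_def images disj_iff)
  qed
qed

lemma act_psum_list:
  assumes "\<sigma> permutes {1..n}"
  shows "act \<sigma> (psum_list n L) = psum_list n L"
proof -
  let ?R = "row_assignments n (length L)"
  have bij: "bij \<sigma>" using assms by (rule permutes_bij)
  have "act \<sigma> (psum_list n L) = mono_comb ?R (\<lambda>rs. mono_act \<sigma> (assign_mono L rs))
          (\<lambda>rs. act_sign \<sigma> (snd (assign_mono L rs)) * assign_coef L rs)"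
    by (simp add: psum_list_eq_mono_comb act_mono_comb finite_row_assignments)
  also have "\<dots> = mono_comb ?R (\<lambda>rs. assign_mono L (map \<sigma> rs)) (\<lambda>rs. assign_coef L (map \<sigma> rs))"
    by (rule mono_comb_cong)
       (auto simp: row_assignments_def mono_act_assign_mono[OF bij] act_sign_assign_coef[OF bij])
  also have "\<dots> = mono_comb (map \<sigma> ` ?R) (assign_mono L) (assign_coef L)"
    using bij_is_inj[OF bij] by (simp add: mono_comb_reindex inj_on_def)
  also have "\<dots> = psum_list n L"
    unfolding row_assignments_def map_permutes_lists_length[OF assms]
    by (simp add: psum_list_eq_mono_comb row_assignments_def)
  finally show ?thesis .
qed

lemma valid_mono_assign_mono:
  assumes "set rs \<subseteq> {1..n}" "\<forall>S\<in>set L. \<forall>e\<in>#S. allowed_entry m m' e"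
  shows "valid_mono n m m' (assign_mono L rs)"
proof -
  have psum: "valid_mono n m m' (psum_mono r S)"
    if "r \<in> {1..n}" "\<forall>e\<in>#S. allowed_entry m m' e" for r S
    using that unfolding valid_mono_def psum_mono_def
    by (auto simp: allowed_entry_def split: if_splits dest!: count_inI)
  have mult: "valid_mono n m m' (mono_mult \<nu> \<rho>)"
    if "valid_mono n m m' \<nu>" "valid_mono n m m' \<rho>" for \<nu> \<rho>
    using that by (auto simp: valid_mono_def mono_mult_def)
  show ?thesis
    using assms by (induction L rs rule: assign_mono.induct)
      (auto intro!: mult psum, simp_all add: valid_mono_def)
qed

lemma psum_list_in_invariants:
  assumes "\<forall>S\<in>set L. \<forall>e\<in>#S. allowed_entry m m' e"
  shows "psum_list n L \<in> invariants n m m'"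
proof -
  let ?R = "row_assignments n (length L)"
  have "valid_mono n m m' \<mu>" if \<mu>: "\<mu> \<in> supp (psum_list n L)" for \<mu>
  proof -
    obtain rs where "rs \<in> ?R" "\<mu> = assign_mono L rs"
      using \<mu> supp_mono_comb[of ?R "assign_mono L" "assign_coef L"]
      unfolding psum_list_eq_mono_comb by blast
    then show ?thesis
      using assms by (auto simp: row_assignments_def intro!: valid_mono_assign_mono)
  qed
  moreover have "finite (supp (psum_list n L))"
    by (simp add: psum_list_eq_mono_comb finite_supp_mono_comb finite_row_assignments)
  ultimately show ?thesis
    by (simp add: invariants_def in_alg_def act_psum_list)
qed

definition lincomb :: "elt set \<Rightarrow> (elt \<Rightarrow> complex) \<Rightarrow> elt" where
  "lincomb F c = (\<lambda>\<mu>. \<Sum>g\<in>F. c g * g \<mu>)"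

lemma cspan_eq_lincomb: "cspan G = {lincomb F c | F c. finite F \<and> F \<subseteq> G}"
  by (auto simp: cspan_def lincomb_def)

lemma supp_lincomb: "supp (lincomb F c) \<subseteq> \<Union> (supp ` F)"
proof
  fix \<mu> assume "\<mu> \<in> supp (lincomb F c)"
  then have "(\<Sum>g\<in>F. c g * g \<mu>) \<noteq> 0" by (simp add: supp_def lincomb_def)
  then obtain g where "g \<in> F" "c g * g \<mu> \<noteq> 0"
    by (rule sum.not_neutral_contains_not_neutral)
  then show "\<mu> \<in> \<Union> (supp ` F)" by (auto simp: supp_def)
qed

lemma act_apply_extend:
  assumes "finite U" "supp f \<subseteq> U"
  shows "act \<sigma> f \<mu>' = (\<Sum>\<mu>\<in>U. (if mono_act \<sigma> \<mu> = \<mu>' then act_sign \<sigma> (snd \<mu>) else 0) * f \<mu>)"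
  unfolding act_def sum_supp_extend[OF assms, symmetric] by (intro sum.cong) auto

lemma act_lincomb:
  assumes "finite F" "\<forall>g\<in>F. finite (supp g)"
  shows "act \<sigma> (lincomb F c) \<mu>' = (\<Sum>g\<in>F. c g * act \<sigma> g \<mu>')"
proof -
  let ?U = "\<Union> (supp ` F)"
  let ?w = "\<lambda>\<mu>. if mono_act \<sigma> \<mu> = \<mu>' then act_sign \<sigma> (snd \<mu>) else 0"
  have fin: "finite ?U" using assms by auto
  have "act \<sigma> (lincomb F c) \<mu>' = (\<Sum>\<mu>\<in>?U. \<Sum>g\<in>F. c g * (?w \<mu> * g \<mu>))"
    by (subst act_apply_extend[OF fin supp_lincomb]) (simp add: lincomb_def sum_distrib_right mult_ac)
  also have "\<dots> = (\<Sum>g\<in>F. c g * (\<Sum>\<mu>\<in>?U. ?w \<mu> * g \<mu>))"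
    by (subst sum.swap) (simp add: sum_distrib_left)
  also have "\<dots> = (\<Sum>g\<in>F. c g * act \<sigma> g \<mu>')"
    using fin by (intro sum.cong refl) (subst act_apply_extend[of ?U], auto)
  finally show ?thesis .
qed

lemma lincomb_in_invariants:
  assumes "finite F" "F \<subseteq> invariants n m m'"
  shows "lincomb F c \<in> invariants n m m'"
proof -
  have fin: "\<forall>g\<in>F. finite (supp g)" and valid: "\<forall>g\<in>F. \<forall>\<mu>\<in>supp g. valid_mono n m m' \<mu>"
    using assms(2) by (auto simp: invariants_def in_alg_def)
  have "finite (supp (lincomb F c))"
    using supp_lincomb[of F c] assms(1) fin by (meson finite_UN_I finite_subset)
  moreover have "\<forall>\<mu>\<in>supp (lincomb F c). valid_mono n m m' \<mu>"
    using supp_lincomb[of F c] valid by blast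
  moreover have "act \<sigma> (lincomb F c) = lincomb F c" if "\<sigma> permutes {1..n}" for \<sigma>
    using assms that unfolding fun_eq_iff act_lincomb[OF assms(1) fin]
    by (auto simp: lincomb_def invariants_def intro!: sum.cong)
  ultimately show ?thesis by (auto simp: invariants_def in_alg_def)
qed

lemma cspan_subset_invariants: "G \<subseteq> invariants n m m' \<Longrightarrow> cspan G \<subseteq> invariants n m m'"
  unfolding cspan_eq_lincomb using lincomb_in_invariants by blast

lemma invariants_add_scaled:
  assumes "f \<in> invariants n m m'" "g \<in> invariants n m m'"
  shows "(\<lambda>\<mu>. f \<mu> + a * g \<mu>) \<in> invariants n m m'"
proof -
  have "(\<lambda>\<mu>. f \<mu> + a * g \<mu>) = lincomb {f, g} (\<lambda>h. (if h = f then 1 else 0) + (if h = g then a else 0))"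
    by (cases "f = g") (auto simp: lincomb_def algebra_simps)
  then show ?thesis using assms lincomb_in_invariants[of "{f, g}"] by simp
qed

lemma cspan_add_scaled:
  assumes "f \<in> cspan G" "g \<in> G"
  shows "(\<lambda>\<mu>. f \<mu> + a * g \<mu>) \<in> cspan G"
proof -
  obtain F c where F: "finite F" "F \<subseteq> G" "f = lincomb F c"
    using assms(1) by (auto simp: cspan_eq_lincomb)
  let ?c = "\<lambda>h. (if h \<in> F then c h else 0) + (if h = g then a else 0)"
  have "lincomb (insert g F) ?c \<mu> = f \<mu> + a * g \<mu>" for \<mu>
  proof -
    have "lincomb (insert g F) ?c \<mu> = (\<Sum>h\<in>insert g F. if h \<in> F then c h * h \<mu> else 0)
        + (\<Sum>h\<in>insert g F. if h = g then a * h \<mu> else 0)"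
      unfolding lincomb_def sum.distrib[symmetric] by (intro sum.cong refl) (simp add: distrib_right)
    also have "\<dots> = f \<mu> + a * g \<mu>"
      using F(1,3) by (simp add: lincomb_def sum.If_cases Int_absorb1 subset_insertI sum.delta')
    finally show ?thesis .
  qed
  then have "(\<lambda>\<mu>. f \<mu> + a * g \<mu>) = lincomb (insert g F) ?c" by auto
  then show ?thesis using F assms(2) by (auto simp: cspan_eq_lincomb)
qed

lemma inj_mono_act:
  assumes "bij \<sigma>"
  shows "inj (mono_act \<sigma>)"
proof (rule injI)
  fix \<mu> \<nu> assume eq: "mono_act \<sigma> \<mu> = mono_act \<sigma> \<nu>"
  have "fst \<mu> (r, k) = fst \<nu> (r, k)" for r k
    using arg_cong[OF eq, of "\<lambda>x. fst x (\<sigma> r, k)"] assms by (simp add: mono_act_def bij_is_inj)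
  moreover have "snd \<mu> = snd \<nu>"
    using arg_cong[OF eq, of snd] assms
    by (simp add: snd_mono_act inj_image_eq_iff prod.inj_map bij_is_inj)
  ultimately show "\<mu> = \<nu>" by (simp add: prod_eq_iff fun_eq_iff)
qed

lemma invariant_apply_mono_act:
  assumes "finite (supp f)" "act \<sigma> f = f" "bij \<sigma>"
  shows "f (mono_act \<sigma> \<mu>) = act_sign \<sigma> (snd \<mu>) * f \<mu>"
proof -
  have "f (mono_act \<sigma> \<mu>) = act \<sigma> f (mono_act \<sigma> \<mu>)" using assms(2) by simp
  also have "\<dots> = (\<Sum>\<nu>\<in>supp f. if \<nu> = \<mu> then act_sign \<sigma> (snd \<nu>) * f \<nu> else 0)"
    using inj_mono_act[OF assms(3)] unfolding act_def by (intro sum.cong refl) (auto dest: injD)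
  also have "\<dots> = act_sign \<sigma> (snd \<mu>) * f \<mu>"
    using assms(1) by (simp add: sum.delta' supp_def)
  finally show ?thesis .
qed

definition occupied_rows :: "mono \<Rightarrow> nat set" where
  "occupied_rows \<mu> = {r. (\<exists>k. fst \<mu> (r, k) \<noteq> 0) \<or> (\<exists>i. (r, i) \<in> snd \<mu>)}"

abbreviation num_rows :: "mono \<Rightarrow> nat" where
  "num_rows \<mu> \<equiv> card (occupied_rows \<mu>)"

definition row_content :: "nat \<Rightarrow> mono \<Rightarrow> nat \<Rightarrow> entry multiset" where
  "row_content m \<mu> r = (\<Sum>k\<in>{1..m}. replicate_mset (fst \<mu> (r, k)) (Ub k)) + mset_set (Bar ` row_bars (snd \<mu>) r)"

definition row_partition :: "nat \<Rightarrow> mono \<Rightarrow> entry multiset multiset" where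
  "row_partition m \<mu> = image_mset (row_content m \<mu>) (mset_set (occupied_rows \<mu>))"

lemma occupied_rows_subset: "valid_mono n m m' \<mu> \<Longrightarrow> occupied_rows \<mu> \<subseteq> {1..n}"
  by (force simp: occupied_rows_def valid_mono_def)

lemma finite_occupied_rows: "valid_mono n m m' \<mu> \<Longrightarrow> finite (occupied_rows \<mu>)"
  using finite_subset[OF occupied_rows_subset] by blast

lemma num_rows_le: "valid_mono n m m' \<mu> \<Longrightarrow> num_rows \<mu> \<le> n"
  using card_mono[OF _ occupied_rows_subset] by fastforce

lemma finite_snd_valid: "valid_mono n m m' \<mu> \<Longrightarrow> finite (snd \<mu>)"
  unfolding valid_mono_def by (meson finite_SigmaI finite_atLeastAtMost finite_subset)

lemma count_row_content_Ub:
  assumes "valid_mono n m m' \<mu>"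
  shows "count (row_content m \<mu> r) (Ub k) = fst \<mu> (r, k)"
proof -
  have "count (row_content m \<mu> r) (Ub k) = (\<Sum>k'\<in>{1..m}. if k' = k then fst \<mu> (r, k) else 0)"
    by (simp add: row_content_def count_sum count_replicate_mset count_mset_set' image_iff)
  also have "\<dots> = fst \<mu> (r, k)"
    using assms by (auto simp: valid_mono_def)
  finally show ?thesis .
qed

lemma count_row_content_Bar:
  assumes "valid_mono n m m' \<mu>"
  shows "count (row_content m \<mu> r) (Bar j) = (if (r, j) \<in> snd \<mu> then 1 else 0)"
  using finite_row_bars[OF finite_snd_valid[OF assms]]
  by (simp add: row_content_def count_sum count_mset_set' row_bars_def image_iff)

lemma mem_row_content:
  assumes "valid_mono n m m' \<mu>"
  shows "Ub k \<in># row_content m \<mu> r \<longleftrightarrow> fst \<mu> (r, k) \<noteq> 0"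
    "Bar j \<in># row_content m \<mu> r \<longleftrightarrow> (r, j) \<in> snd \<mu>"
  by (simp_all add: count_greater_zero_iff[symmetric] count_row_content_Ub[OF assms]
      count_row_content_Bar[OF assms] del: count_greater_zero_iff)

lemma row_content_eq_iff:
  assumes "valid_mono n m m' \<mu>"
  shows "row_content m \<mu> r1 = row_content m \<mu> r2 \<longleftrightarrow>
         (\<forall>k. fst \<mu> (r1, k) = fst \<mu> (r2, k)) \<and> (\<forall>j. (r1, j) \<in> snd \<mu> \<longleftrightarrow> (r2, j) \<in> snd \<mu>)"
proof -
  have "(\<forall>e. P e) \<longleftrightarrow> (\<forall>k. P (Ub k)) \<and> (\<forall>j. P (Bar j))" for P
    by (metis entry.exhaust)
  then show ?thesis
    by (simp add: multiset_eq_iff count_row_content_Ub[OF assms] count_row_content_Bar[OF assms])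
      blast
qed

lemma nbar_row_content:
  assumes "valid_mono n m m' \<mu>"
  shows "nbar (row_content m \<mu> r) = card (row_bars (snd \<mu>) r)"
proof -
  have fin: "finite (row_bars (snd \<mu>) r)"
    by (rule finite_row_bars[OF finite_snd_valid[OF assms]])
  have "filter_mset (\<lambda>e. \<exists>j. e = Bar j) (row_content m \<mu> r) = mset_set (Bar ` row_bars (snd \<mu>) r)"
    using fin by (auto simp: row_content_def filter_mset_sum_list count_sum count_replicate_mset
        count_filter_mset count_mset_set' multiset_eq_iff)
  then show ?thesis
    using fin by (simp add: nbar_def card_image inj_on_def)
qed

lemma row_content_super:
  assumes "valid_mono n m m' \<mu>" "r \<in> occupied_rows \<mu>"
  shows "row_content m \<mu> r \<noteq> {#}" "\<forall>e\<in>#row_content m \<mu> r. allowed_entry m m' e"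
    "\<forall>j. count (row_content m \<mu> r) (Bar j) \<le> 1"
proof -
  obtain e where "e \<in># row_content m \<mu> r"
    using assms(2) mem_row_content[OF assms(1)] unfolding occupied_rows_def by blast
  then show "row_content m \<mu> r \<noteq> {#}" by auto
  show "\<forall>e\<in>#row_content m \<mu> r. allowed_entry m m' e"
  proof
    fix e assume "e \<in># row_content m \<mu> r"
    then show "allowed_entry m m' e"
      using assms(1) mem_row_content[OF assms(1)]
      by (cases e) (auto simp: allowed_entry_def valid_mono_def)
  qed
  show "\<forall>j. count (row_content m \<mu> r) (Bar j) \<le> 1"
    by (simp add: count_row_content_Bar[OF assms(1)])
qed

lemma assign_mono_map:
  "distinct rs \<Longrightarrow> assign_mono (map g rs) rs =
     ((\<lambda>(r, k). if r \<in> set rs then count (g r) (Ub k) else 0), {(r, j). r \<in> set rs \<and> Bar j \<in># g r})"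
  by (induction rs) (auto simp: mono_mult_def psum_mono_def fun_eq_iff split: prod.splits)

lemma assign_mono_row_content:
  assumes "valid_mono n m m' \<mu>" "distinct rs" "set rs = occupied_rows \<mu>"
  shows "assign_mono (map (row_content m \<mu>) rs) rs = \<mu>"
proof -
  have "(\<lambda>(r, k). if r \<in> set rs then count (row_content m \<mu> r) (Ub k) else 0) = fst \<mu>"
    using assms by (auto simp: fun_eq_iff count_row_content_Ub occupied_rows_def)
  moreover have "{(r, j). r \<in> set rs \<and> Bar j \<in># row_content m \<mu> r} = snd \<mu>"
    using assms by (auto simp: occupied_rows_def mem_row_content[OF assms(1)])
  ultimately show ?thesis
    using assms(2) by (simp add: assign_mono_map)
qed

lemma occupied_rows_assign_mono: "occupied_rows (assign_mono L rs) \<subseteq> set rs"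
  by (induction L rs rule: assign_mono.induct)
     (auto simp: occupied_rows_def mono_mult_def psum_mono_def split: if_splits)

lemma num_rows_assign_mono:
  assumes "length rs = l"
  shows "num_rows (assign_mono L rs) \<le> l" "num_rows (assign_mono L rs) = l \<Longrightarrow> distinct rs"
proof -
  have "num_rows (assign_mono L rs) \<le> card (set rs)"
    by (rule card_mono[OF _ occupied_rows_assign_mono]) simp
  moreover have "card (set rs) \<le> l" using assms card_length by blast
  ultimately show "num_rows (assign_mono L rs) \<le> l" by simp
  assume "num_rows (assign_mono L rs) = l"
  then show "distinct rs"
    using \<open>num_rows (assign_mono L rs) \<le> card (set rs)\<close> \<open>card (set rs) \<le> l\<close> assms
    by (simp add: card_distinct)
qed

lemma assign_coef_nonzero:
  assumes "length L = length rs" "distinct rs"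
  shows "assign_coef L rs \<noteq> 0"
  using assms
proof (induction L rs rule: list_induct2)
  case (Cons S L r rs)
  have "fst u \<in> set rs" if "u \<in> snd (assign_mono L rs)" for u
    using that by (induction L rs rule: assign_mono.induct) (auto simp: mono_mult_def psum_mono_def)
  then have "snd (psum_mono r S) \<inter> snd (assign_mono L rs) = {}"
    using Cons(3) by (auto simp: psum_mono_def)
  then show ?case using Cons by (simp add: mono_coef_def)
qed simp

section \<open>Monomials of invariants\<close>

lemma mono_act_fixed_rows:
  assumes "bij \<sigma>" "mono_act \<sigma> \<mu> = \<mu>"
  shows "fst \<mu> (\<sigma> r, k) = fst \<mu> (r, k)" "(\<sigma> r, j) \<in> snd \<mu> \<longleftrightarrow> (r, j) \<in> snd \<mu>"
proof -
  have inj: "inj \<sigma>" using assms(1) by (rule bij_is_inj)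
  have "fst (mono_act \<sigma> \<mu>) (\<sigma> r, k) = fst \<mu> (r, k)"
    using inj by (simp add: mono_act_def)
  then show "fst \<mu> (\<sigma> r, k) = fst \<mu> (r, k)" using assms(2) by simp
  have "(\<sigma> r, j) \<in> map_prod \<sigma> id ` snd \<mu> \<longleftrightarrow> (r, j) \<in> snd \<mu>"
    using inj by (force dest: injD)
  then show "(\<sigma> r, j) \<in> snd \<mu> \<longleftrightarrow> (r, j) \<in> snd \<mu>"
    using assms(2) snd_mono_act by metis
qed

text \<open>If equal rows never carry an odd number of \<open>\<theta>\<close>'s, then every permutation fixing a monomial
  fixes its rows with an odd number of \<open>\<theta>\<close>'s, and each row inversion of it involves a row with an
  even number of them.\<close>

lemma act_sign_stabilizer:
  assumes valid: "valid_mono n m m' \<mu>" and perm: "\<sigma> permutes {1..n}" and fixed: "mono_act \<sigma> \<mu> = \<mu>"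
    and even: "\<And>r1 r2. r1 \<in> occupied_rows \<mu> \<Longrightarrow> r2 \<in> occupied_rows \<mu> \<Longrightarrow> r1 \<noteq> r2 \<Longrightarrow>
      row_content m \<mu> r1 = row_content m \<mu> r2 \<Longrightarrow> even (card (row_bars (snd \<mu>) r1))"
  shows "act_sign \<sigma> (snd \<mu>) = 1"
proof (rule act_sign_eq_one)
  have bij: "bij \<sigma>" using perm by (rule permutes_bij)
  then show "inj \<sigma>" by (rule bij_is_inj)
  show "finite (snd \<mu>)" by (rule finite_snd_valid[OF valid])
  have fixes_odd: "\<sigma> r = r" if "r \<in> fst ` snd \<mu>" "odd (card (row_bars (snd \<mu>) r))" for r
  proof (rule ccontr)
    assume "\<sigma> r \<noteq> r"
    moreover have "r \<in> occupied_rows \<mu>" "\<sigma> r \<in> occupied_rows \<mu>"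
      using that(1) mono_act_fixed_rows(2)[OF bij fixed] by (force simp: occupied_rows_def)+
    moreover have "row_content m \<mu> (\<sigma> r) = row_content m \<mu> r"
      using mono_act_fixed_rows[OF bij fixed] by (simp add: row_content_eq_iff[OF valid])
    moreover have "row_bars (snd \<mu>) (\<sigma> r) = row_bars (snd \<mu>) r"
      using mono_act_fixed_rows(2)[OF bij fixed] by (simp add: row_bars_def)
    ultimately show False using even[of "\<sigma> r" r] that(2) by auto
  qed
  fix p assume "p \<in> row_inversions \<sigma> (fst ` snd \<mu>)"
  then obtain r t where p: "p = (r, t)" "r < t" "\<sigma> t < \<sigma> r"
    and rows: "r \<in> fst ` snd \<mu>" "t \<in> fst ` snd \<mu>"
    unfolding row_inversions_def by blast
  then show "even (card (row_bars (snd \<mu>) (fst p)) * card (row_bars (snd \<mu>) (snd p)))"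
    using fixes_odd[OF rows(1)] fixes_odd[OF rows(2)] by (cases "odd (card (row_bars (snd \<mu>) r))") auto
qed

lemma mono_act_transpose_fixed:
  assumes "\<forall>k. fst \<mu> (r1, k) = fst \<mu> (r2, k)" "\<forall>j. (r1, j) \<in> snd \<mu> \<longleftrightarrow> (r2, j) \<in> snd \<mu>"
  shows "mono_act (Transposition.transpose r1 r2) \<mu> = \<mu>"
proof -
  let ?t = "Transposition.transpose r1 r2"
  have swap: "fst \<mu> (?t r, k) = fst \<mu> (r, k)" "(?t r, j) \<in> snd \<mu> \<longleftrightarrow> (r, j) \<in> snd \<mu>" for r k j
    using assms by (auto simp: transpose_def)
  have "fst (mono_act ?t \<mu>) = fst \<mu>"
    by (auto simp: mono_act_def inv_transpose_eq swap fun_eq_iff)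
  moreover have "map_prod ?t id ` snd \<mu> = snd \<mu>"
  proof
    show "map_prod ?t id ` snd \<mu> \<subseteq> snd \<mu>" using swap(2) by auto
    show "snd \<mu> \<subseteq> map_prod ?t id ` snd \<mu>"
    proof
      fix u assume u: "u \<in> snd \<mu>"
      have "u = map_prod ?t id (?t (fst u), snd u)" by simp
      moreover have "(?t (fst u), snd u) \<in> snd \<mu>" using u swap(2)[of "fst u" "snd u"] by simp
      ultimately show "u \<in> map_prod ?t id ` snd \<mu>" by blast
    qed
  qed
  ultimately show ?thesis by (simp add: prod_eq_iff snd_mono_act)
qed

text \<open>Two equal rows with an odd number of \<open>\<theta>\<close>'s are swapped by a transposition that fixes the
  monomial but acts on it by \<open>-1\<close>, so an invariant cannot contain it.\<close>

lemma even_row_bars_if_equal_rows: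
  assumes f: "f \<in> invariants n m m'" and \<mu>: "\<mu> \<in> supp f"
    and rows: "r1 \<in> occupied_rows \<mu>" "r2 \<in> occupied_rows \<mu>" "r1 \<noteq> r2"
    and eq: "row_content m \<mu> r1 = row_content m \<mu> r2"
  shows "even (card (row_bars (snd \<mu>) r1))"
proof (rule ccontr)
  assume odd: "odd (card (row_bars (snd \<mu>) r1))"
  have valid: "valid_mono n m m' \<mu>" and fin: "finite (supp f)"
    using f \<mu> by (auto simp: invariants_def in_alg_def)
  have same: "\<forall>k. fst \<mu> (r1, k) = fst \<mu> (r2, k)" "\<forall>j. (r1, j) \<in> snd \<mu> \<longleftrightarrow> (r2, j) \<in> snd \<mu>"
    using eq by (simp_all add: row_content_eq_iff[OF valid])
  define a b where "a = min r1 r2" and "b = max r1 r2"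
  have ab: "a < b" "row_bars (snd \<mu>) a = row_bars (snd \<mu>) b" "odd (card (row_bars (snd \<mu>) a))"
    using rows(3) same(2) odd by (auto simp: a_def b_def min_def max_def row_bars_def)
  let ?t = "Transposition.transpose a b"
  have "?t = Transposition.transpose r1 r2"
    by (auto simp: a_def b_def min_def max_def transpose_commute)
  then have fixed: "mono_act ?t \<mu> = \<mu>" using mono_act_transpose_fixed[OF same] by simp
  have "a \<in> occupied_rows \<mu>" "b \<in> occupied_rows \<mu>"
    using rows(1,2) by (simp_all add: a_def b_def min_def max_def)
  then have "?t permutes {1..n}"
    using occupied_rows_subset[OF valid] by (intro permutes_swap_id) auto
  then have "f (mono_act ?t \<mu>) = act_sign ?t (snd \<mu>) * f \<mu>"
    using f fin by (intro invariant_apply_mono_act) (auto simp: invariants_def permutes_bij)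
  then have "f \<mu> = - f \<mu>"
    using fixed act_sign_transpose[OF ab finite_snd_valid[OF valid]] by simp
  then show False using \<mu> by (simp add: supp_def)
qed

lemma row_partition_super:
  assumes f: "f \<in> invariants n m m'" and \<mu>: "\<mu> \<in> supp f"
  shows "super_mset_partition m m' (row_partition m \<mu>)" "size (row_partition m \<mu>) = num_rows \<mu>"
proof -
  have valid: "valid_mono n m m' \<mu>" using f \<mu> by (auto simp: invariants_def in_alg_def)
  have fin: "finite (occupied_rows \<mu>)" by (rule finite_occupied_rows[OF valid])
  show "size (row_partition m \<mu>) = num_rows \<mu>" by (simp add: row_partition_def)
  have "count (row_partition m \<mu>) (row_content m \<mu> r) \<le> 1"
    if r: "r \<in> occupied_rows \<mu>" and odd: "odd (nbar (row_content m \<mu> r))" for r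
  proof -
    have "r' = r" if r': "r' \<in> occupied_rows \<mu>" "row_content m \<mu> r' = row_content m \<mu> r" for r'
    proof (rule ccontr)
      assume "r' \<noteq> r"
      then have "even (card (row_bars (snd \<mu>) r'))"
        using even_row_bars_if_equal_rows[OF f \<mu> r'(1) r _ r'(2)] by blast
      then show False
        using odd r'(2) nbar_row_content[OF valid, of r'] by simp
    qed
    then have "card {r' \<in> occupied_rows \<mu>. row_content m \<mu> r' = row_content m \<mu> r} \<le> card {r}"
      by (intro card_mono) auto
    then show ?thesis
      by (simp add: row_partition_def count_image_mset_eq_card_vimage[OF fin])
  qed
  then show "super_mset_partition m m' (row_partition m \<mu>)"
    using row_content_super[OF valid] fin by (auto simp: super_mset_partition_def row_partition_def)
qed

lemma row_partition_assignment:
  assumes valid: "valid_mono n m m' \<mu>" and L: "mset L = row_partition m \<mu>"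
  obtains rs0 where "rs0 \<in> row_assignments n (length L)" "distinct rs0"
    "assign_mono L rs0 = \<mu>" "length L = num_rows \<mu>"
proof -
  obtain rs0 where rs0: "distinct rs0" "set rs0 = occupied_rows \<mu>" "map (row_content m \<mu>) rs0 = L"
    using exists_distinct_list_image_mset[OF finite_occupied_rows[OF valid]] L
    by (auto simp: row_partition_def)
  moreover have "length L = num_rows \<mu>"
    using rs0 distinct_card by fastforce
  moreover have "rs0 \<in> row_assignments n (length L)"
    using rs0 occupied_rows_subset[OF valid] by (auto simp: row_assignments_def)
  ultimately show thesis
    using that assign_mono_row_content[OF valid rs0(1,2)] by blast
qed

text \<open>A monomial of \<open>p\<^sub>\<pi>\<close> with as many rows as \<open>\<mu>\<close> comes from an assignment of the factors to
  distinct rows, which is a row permutation of the assignment producing \<open>\<mu>\<close>.\<close>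

lemma supp_psum_list_row_partition:
  assumes valid: "valid_mono n m m' \<mu>" and L: "mset L = row_partition m \<mu>"
    and \<nu>: "\<nu> \<in> supp (psum_list n L)"
  shows "num_rows \<nu> \<le> num_rows \<mu>"
    "num_rows \<nu> = num_rows \<mu> \<Longrightarrow> \<exists>\<sigma>. \<sigma> permutes {1..n} \<and> \<nu> = mono_act \<sigma> \<mu>"
proof -
  obtain rs0 where rs0: "rs0 \<in> row_assignments n (length L)" "distinct rs0"
    "assign_mono L rs0 = \<mu>" "length L = num_rows \<mu>"
    using row_partition_assignment[OF valid L] by blast
  obtain rs where rs: "rs \<in> row_assignments n (length L)" "\<nu> = assign_mono L rs"
    using \<nu> supp_mono_comb unfolding psum_list_eq_mono_comb by blast
  then have len: "length rs = num_rows \<mu>" using rs0(4) by (simp add: row_assignments_def)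
  show "num_rows \<nu> \<le> num_rows \<mu>"
    using num_rows_assign_mono(1)[OF len] rs(2) by simp
  assume "num_rows \<nu> = num_rows \<mu>"
  then have "distinct rs" using num_rows_assign_mono(2)[OF len] rs(2) by simp
  then obtain \<sigma> where \<sigma>: "\<sigma> permutes {1..n}" "map \<sigma> rs0 = rs"
    using exists_permutes_map[of rs0 rs "{1..n}"] rs0 rs by (auto simp: row_assignments_def)
  then have "\<nu> = mono_act \<sigma> \<mu>"
    using mono_act_assign_mono[OF permutes_bij[OF \<sigma>(1)], of L rs0] rs0 rs
    by (simp add: row_assignments_def)
  then show "\<exists>\<sigma>. \<sigma> permutes {1..n} \<and> \<nu> = mono_act \<sigma> \<mu>" using \<sigma>(1) by blast
qed

text \<open>Every assignment producing \<open>\<mu>\<close> differs from a fixed one by a permutation stabilising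
  \<open>\<mu>\<close>; for a monomial of an invariant such a permutation has sign \<open>1\<close>, so all these terms have
  the same nonzero coefficient and cannot cancel.\<close>

lemma psum_list_row_partition_nonzero:
  assumes f: "f \<in> invariants n m m'" and \<mu>: "\<mu> \<in> supp f" and L: "mset L = row_partition m \<mu>"
  shows "psum_list n L \<mu> \<noteq> 0"
proof -
  let ?R = "row_assignments n (length L)"
  have valid: "valid_mono n m m' \<mu>" using f \<mu> by (auto simp: invariants_def in_alg_def)
  obtain rs0 where rs0: "rs0 \<in> ?R" "distinct rs0" "assign_mono L rs0 = \<mu>" "length L = num_rows \<mu>"
    using row_partition_assignment[OF valid L] by blast
  have same_coef: "assign_coef L rs = assign_coef L rs0" if rs: "rs \<in> ?R" "assign_mono L rs = \<mu>" for rs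
  proof -
    have len: "length rs = length L" "length rs0 = length L" using rs(1) rs0(1) by (simp_all add: row_assignments_def)
    then have "distinct rs" using num_rows_assign_mono(2)[of rs "length L" L] rs(2) rs0(4) by simp
    then obtain \<sigma> where \<sigma>: "\<sigma> permutes {1..n}" "map \<sigma> rs0 = rs"
      using exists_permutes_map[of rs0 rs "{1..n}"] rs0 rs len by (auto simp: row_assignments_def)
    have bij: "bij \<sigma>" using \<sigma>(1) by (rule permutes_bij)
    have "mono_act \<sigma> \<mu> = \<mu>"
      using mono_act_assign_mono[OF bij, of L rs0] rs0(3) rs(2) \<sigma>(2) len by simp
    then have "act_sign \<sigma> (snd \<mu>) = 1"
      using act_sign_stabilizer[OF valid \<sigma>(1)] even_row_bars_if_equal_rows[OF f \<mu>] by blast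
    then show ?thesis
      using act_sign_assign_coef[OF bij, of L rs0] rs0(3) \<sigma>(2) len by simp
  qed
  have "psum_list n L \<mu> = (\<Sum>rs\<in>{rs \<in> ?R. assign_mono L rs = \<mu>}. assign_coef L rs0)"
    unfolding psum_list_eq_mono_comb mono_comb_def using same_coef
    by (simp add: sum.inter_filter[symmetric] finite_row_assignments cong: if_cong)
  also have "\<dots> = of_nat (card {rs \<in> ?R. assign_mono L rs = \<mu>}) * assign_coef L rs0" by simp
  moreover have "card {rs \<in> ?R. assign_mono L rs = \<mu>} \<noteq> 0"
    using rs0(1,3) finite_row_assignments[of n "length L"] by (auto simp: card_eq_0_iff)
  moreover have "assign_coef L rs0 \<noteq> 0"
    using rs0 by (intro assign_coef_nonzero) (simp_all add: row_assignments_def)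
  ultimately show ?thesis by simp
qed

section \<open>Spanning\<close>

definition psum_gens :: "nat \<Rightarrow> nat \<Rightarrow> nat \<Rightarrow> (entry multiset multiset \<Rightarrow> entry multiset list) \<Rightarrow> elt set" where
  "psum_gens n m m' ord = {psum_list n (ord \<pi>) | \<pi>. super_mset_partition m m' \<pi> \<and> size \<pi> \<le> n}"

lemma psum_gens_subset_invariants:
  assumes "\<forall>\<pi>. mset (ord \<pi>) = \<pi>"
  shows "psum_gens n m m' ord \<subseteq> invariants n m m'"
proof
  fix p assume "p \<in> psum_gens n m m' ord"
  then obtain \<pi> where p: "p = psum_list n (ord \<pi>)" and \<pi>: "super_mset_partition m m' \<pi>"
    by (auto simp: psum_gens_def)
  have "set (ord \<pi>) = set_mset \<pi>" using assms by (metis set_mset_mset)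
  then show "p \<in> invariants n m m'"
    using \<pi> p psum_list_in_invariants by (simp add: super_mset_partition_def)
qed

text \<open>An invariant vanishing at \<open>\<mu>\<close> vanishes on the orbit of \<open>\<mu>\<close>, so subtracting the right multiple
  of \<open>p\<close> removes \<open>\<mu>\<close> without creating monomials with \<open>K\<close> rows.\<close>

lemma cancel_top_orbit:
  assumes f: "f \<in> invariants n m m'" and p: "p \<in> invariants n m m'"
    and top: "\<forall>\<nu>\<in>supp f. num_rows \<nu> \<le> K" and \<mu>: "\<mu> \<in> supp f" "num_rows \<mu> = K" and p_nz: "p \<mu> \<noteq> 0"
    and supp_p: "\<And>\<nu>. \<nu> \<in> supp p \<Longrightarrow> num_rows \<nu> \<le> K"
      "\<And>\<nu>. \<nu> \<in> supp p \<Longrightarrow> num_rows \<nu> = K \<Longrightarrow> \<exists>\<sigma>. \<sigma> permutes {1..n} \<and> \<nu> = mono_act \<sigma> \<mu>"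
  defines "g \<equiv> \<lambda>\<nu>. f \<nu> + (- (f \<mu> / p \<mu>)) * p \<nu>"
  shows "g \<in> invariants n m m'" "\<forall>\<nu>\<in>supp g. num_rows \<nu> \<le> K"
    "card {\<nu> \<in> supp g. num_rows \<nu> = K} < card {\<nu> \<in> supp f. num_rows \<nu> = K}"
proof -
  show g: "g \<in> invariants n m m'"
    unfolding g_def using f p by (rule invariants_add_scaled)
  have g_orbit: "g (mono_act \<sigma> \<mu>) = 0" if "\<sigma> permutes {1..n}" for \<sigma>
  proof -
    have "g \<mu> = 0" using p_nz by (simp add: g_def)
    moreover have "g (mono_act \<sigma> \<mu>) = act_sign \<sigma> (snd \<mu>) * g \<mu>"
      using g that by (intro invariant_apply_mono_act) (auto simp: invariants_def in_alg_def permutes_bij)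
    ultimately show ?thesis by simp
  qed
  have supp_g: "\<nu> \<in> supp f \<or> \<nu> \<in> supp p" if "\<nu> \<in> supp g" for \<nu>
    using that by (auto simp: supp_def g_def)
  show "\<forall>\<nu>\<in>supp g. num_rows \<nu> \<le> K"
    using supp_g top supp_p(1) by blast
  have "\<nu> \<in> supp f" if \<nu>: "\<nu> \<in> supp g" "num_rows \<nu> = K" for \<nu>
  proof (rule ccontr)
    assume "\<nu> \<notin> supp f"
    then have "\<nu> \<in> supp p" using supp_g[OF \<nu>(1)] by blast
    then obtain \<sigma> where "\<sigma> permutes {1..n}" "\<nu> = mono_act \<sigma> \<mu>" using supp_p(2) \<nu>(2) by blast
    then show False using g_orbit \<nu>(1) by (simp add: supp_def)
  qed
  moreover have "\<mu> \<notin> supp g"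
    using g_orbit[OF permutes_id] by (simp add: supp_def mono_act_def)
  ultimately have "{\<nu> \<in> supp g. num_rows \<nu> = K} \<subset> {\<nu> \<in> supp f. num_rows \<nu> = K}"
    using \<mu> by blast
  then show "card {\<nu> \<in> supp g. num_rows \<nu> = K} < card {\<nu> \<in> supp f. num_rows \<nu> = K}"
    using f by (intro psubset_card_mono) (simp_all add: invariants_def in_alg_def)
qed

lemma reduce_top_monomial:
  assumes ord: "\<forall>\<pi>. mset (ord \<pi>) = \<pi>" and f: "f \<in> invariants n m m'"
    and top: "\<forall>\<nu>\<in>supp f. num_rows \<nu> \<le> K" and \<mu>: "\<mu> \<in> supp f" "num_rows \<mu> = K"
  obtains g c p where "g \<in> invariants n m m'" "p \<in> psum_gens n m m' ord" "f = (\<lambda>\<nu>. g \<nu> + c * p \<nu>)"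
    "\<forall>\<nu>\<in>supp g. num_rows \<nu> \<le> K"
    "card {\<nu> \<in> supp g. num_rows \<nu> = K} < card {\<nu> \<in> supp f. num_rows \<nu> = K}"
proof -
  have valid: "valid_mono n m m' \<mu>"
    using f \<mu> by (auto simp: invariants_def in_alg_def)
  define p where "p = psum_list n (ord (row_partition m \<mu>))"
  have L: "mset (ord (row_partition m \<mu>)) = row_partition m \<mu>" using ord by simp
  have p_gen: "p \<in> psum_gens n m m' ord"
    using row_partition_super[OF f \<mu>(1)] num_rows_le[OF valid] by (auto simp: psum_gens_def p_def)
  have p_inv: "p \<in> invariants n m m'" using p_gen psum_gens_subset_invariants[OF ord] by blast
  have p_nz: "p \<mu> \<noteq> 0" unfolding p_def by (rule psum_list_row_partition_nonzero[OF f \<mu>(1) L])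
  have supp_p: "\<And>\<nu>. \<nu> \<in> supp p \<Longrightarrow> num_rows \<nu> \<le> K"
    "\<And>\<nu>. \<nu> \<in> supp p \<Longrightarrow> num_rows \<nu> = K \<Longrightarrow> \<exists>\<sigma>. \<sigma> permutes {1..n} \<and> \<nu> = mono_act \<sigma> \<mu>"
    using supp_psum_list_row_partition[OF valid L, folded p_def] \<mu>(2) by auto
  note cancel = cancel_top_orbit[OF f p_inv top \<mu> p_nz supp_p]
  have "f = (\<lambda>\<nu>. (\<lambda>\<nu>. f \<nu> + - (f \<mu> / p \<mu>) * p \<nu>) \<nu> + f \<mu> / p \<mu> * p \<nu>)"
    by (simp add: fun_eq_iff)
  then show thesis using that cancel p_gen by blast
qed

lemma invariant_in_cspan_psum_gens:
  assumes ord: "\<forall>\<pi>. mset (ord \<pi>) = \<pi>"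
  shows "f \<in> invariants n m m' \<Longrightarrow> \<forall>\<mu>\<in>supp f. num_rows \<mu> < K \<Longrightarrow> f \<in> cspan (psum_gens n m m' ord)"
proof (induction K arbitrary: f)
  case 0
  then have "f = lincomb {} (\<lambda>_. 0)" by (auto simp: lincomb_def supp_def)
  then show ?case by (auto simp: cspan_eq_lincomb)
next
  case (Suc K)
  from Suc.prems show ?case
  proof (induction "card {\<mu> \<in> supp f. num_rows \<mu> = K}" arbitrary: f rule: less_induct)
    case less
    show ?case
    proof (cases "\<exists>\<mu>\<in>supp f. num_rows \<mu> = K")
      case False
      then show ?thesis using less.prems by (intro Suc.IH) (auto simp: less_Suc_eq)
    next
      case True
      then obtain \<mu> where \<mu>: "\<mu> \<in> supp f" "num_rows \<mu> = K" by blast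
      have "\<forall>\<nu>\<in>supp f. num_rows \<nu> \<le> K" using less.prems(2) by (simp add: less_Suc_eq_le)
      then obtain g c p where g: "g \<in> invariants n m m'" "p \<in> psum_gens n m m' ord"
        "f = (\<lambda>\<nu>. g \<nu> + c * p \<nu>)" "\<forall>\<nu>\<in>supp g. num_rows \<nu> \<le> K"
        "card {\<nu> \<in> supp g. num_rows \<nu> = K} < card {\<nu> \<in> supp f. num_rows \<nu> = K}"
        using reduce_top_monomial[OF ord less.prems(1) _ \<mu>] by blast
      have "g \<in> cspan (psum_gens n m m' ord)"
        using less.hyps[OF g(5) g(1)] g(4) by (simp add: less_Suc_eq_le)
      then show ?thesis using g(2,3) cspan_add_scaled by simp
    qed
  qed
qed

theorem lemma4p2:
  fixes n m m' :: nat
    and ord :: "entry multiset multiset \<Rightarrow> entry multiset list"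
  assumes "n \<ge> 1"
    and "\<forall>\<pi>. mset (ord \<pi>) = \<pi>"
  shows "cspan {psum_list n (ord \<pi>) | \<pi>. super_mset_partition m m' \<pi> \<and> size \<pi> \<le> n}
           = invariants n m m'"
proof
  show "cspan {psum_list n (ord \<pi>) | \<pi>. super_mset_partition m m' \<pi> \<and> size \<pi> \<le> n} \<subseteq> invariants n m m'"
    using cspan_subset_invariants psum_gens_subset_invariants[OF assms(2)]
    unfolding psum_gens_def by blast
  show "invariants n m m' \<subseteq> cspan {psum_list n (ord \<pi>) | \<pi>. super_mset_partition m m' \<pi> \<and> size \<pi> \<le> n}"
  proof
    fix f assume f: "f \<in> invariants n m m'"
    then have "\<forall>\<mu>\<in>supp f. num_rows \<mu> < Suc n"
      using num_rows_le by (fastforce simp: invariants_def in_alg_def)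
    then show "f \<in> cspan {psum_list n (ord \<pi>) | \<pi>. super_mset_partition m m' \<pi> \<and> size \<pi> \<le> n}"
      using invariant_in_cspan_psum_gens[OF assms(2) f] unfolding psum_gens_def by blast
  qed
qed

end
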